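(* Let $1\le k\le d$ and let $\{U_1,\dots,U_k\}$ be a collection of independent open balls in $\mathbb R^d$. Then every interval $[\sigma,\tau]\subseteq 2^{[k]}$ is pierceable at some point in the realization $\{U_1,\dots,U_k\}$.
   Context: For sets $U_1,\dots,U_n\subseteq\mathbb R^d$, the atom of $\sigma\subseteq[n]$ is $\bigcap_{i\in\sigma}U_i\setminus\bigcup_{j\in[n]\setminus\sigma}U_j$ (empty intersection meaning $\mathbb R^d$), and the code of the collection is the set of $\sigma$ with nonempty atom; the collection realizes that code. A collection of open balls $\{U_1,\dots,U_k\}$ is independent if its code is all of $2^{[k]}$. For $\sigma\subseteq\tau$, $[\sigma,\tau]=\{\gamma:\sigma\subseteq\gamma\subseteq\tau\}$. Given a realization $\mathcal U$ of a code $\mathcal C$ in $\mathbb R^d$, an interval $[\sigma,\tau]\subseteq\mathcal C$ is pierceable at $p\in\mathbb R^d$ if the codewords whose atoms meet every sufficiently small neighborhood of $p$ are exactly those in $[\sigma,\tau]$; equivalently, $p$ is a limit point of the atom of every codeword in $[\sigma,\tau]$ and of no other atom. *)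

theory Defs
  imports "HOL-Analysis.Analysis"
begin

text \<open>Sets indexed by [n] = {1..n}. Atom of sigma: intersection over sigma
  (empty intersection = UNIV) minus union over the rest.\<close>
definition atom :: "(nat \<Rightarrow> 'a set) \<Rightarrow> nat \<Rightarrow> nat set \<Rightarrow> 'a set" where
  "atom U n \<sigma> = (\<Inter>i\<in>\<sigma>. U i) - (\<Union>j\<in>{1..n} - \<sigma>. U j)"

definition code :: "(nat \<Rightarrow> 'a set) \<Rightarrow> nat \<Rightarrow> nat set set" where
  "code U n = {\<sigma>. \<sigma> \<subseteq> {1..n} \<and> atom U n \<sigma> \<noteq> {}}"

definition independent_balls :: "(nat \<Rightarrow> 'a::metric_space set) \<Rightarrow> nat \<Rightarrow> bool" where
  "independent_balls U k \<longleftrightarrow>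
     (\<forall>i\<in>{1..k}. \<exists>c r. 0 < r \<and> U i = ball c r) \<and> code U k = Pow {1..k}"

definition interval :: "nat set \<Rightarrow> nat set \<Rightarrow> nat set set" where
  "interval \<sigma> \<tau> = {\<gamma>. \<sigma> \<subseteq> \<gamma> \<and> \<gamma> \<subseteq> \<tau>}"

definition pierceable_at ::
  "(nat \<Rightarrow> 'a::topological_space set) \<Rightarrow> nat \<Rightarrow> nat set \<Rightarrow> nat set \<Rightarrow> 'a \<Rightarrow> bool" where
  "pierceable_at U n \<sigma> \<tau> p \<longleftrightarrow>
     interval \<sigma> \<tau> \<subseteq> code U n \<and>
     {\<gamma> \<in> code U n. \<forall>N. open N \<and> p \<in> N \<longrightarrow> atom U n \<gamma> \<inter> N \<noteq> {}} = interval \<sigma> \<tau>"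

end

theory Submission
  imports Defs
begin

text \<open>Let \<open>P\<^sub>i(x) = |x - c\<^sub>i|\<^sup>2 - r\<^sub>i\<^sup>2\<close> be the power of \<open>x\<close> with respect to the \<open>i\<close>-th sphere, so
  that the atom of \<open>\<gamma>\<close> is where \<open>P\<^sub>i < 0\<close> exactly for \<open>i \<in> \<gamma>\<close>. Since \<open>k \<le> d\<close>, all centres lie on
  a hyperplane \<open>u \<bullet> z = b\<close>, and moving \<open>x\<close> along \<open>u\<close> realises, for any \<open>T \<ge> |x|\<^sup>2\<close>, the values
  \<open>T - 2 c\<^sub>i \<bullet> x + |c\<^sub>i|\<^sup>2 - r\<^sub>i\<^sup>2\<close> for all \<open>i\<close> at once. These are affine in \<open>(x, T)\<close>, so convex
  combinations of power vectors are again power vectors.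

  Independence gives for every \<open>\<gamma>\<close> a point with \<open>P\<^sub>i < 0\<close> for \<open>i \<in> \<gamma>\<close> and \<open>P\<^sub>i > 0\<close> otherwise.
  A discrete Poincare-Miranda argument combines the points for \<open>\<gamma> = \<sigma> \<union> S\<close>, \<open>S \<subseteq> \<tau> - \<sigma>\<close>, into
  a point \<open>p\<close> with \<open>P\<^sub>i < 0\<close> on \<open>\<sigma>\<close>, \<open>P\<^sub>i = 0\<close> on \<open>\<tau> - \<sigma>\<close> and \<open>P\<^sub>i > 0\<close> off \<open>\<tau>\<close>. Near \<open>p\<close> only
  atoms of \<open>[\<sigma>, \<tau>]\<close> occur, and moving from \<open>p\<close> towards the point of any \<open>\<gamma> \<in> [\<sigma>, \<tau>]\<close>
  enters the atom of \<open>\<gamma>\<close> at once.\<close>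

lemma convex_on_norm_power2: "convex_on UNIV (\<lambda>x::'a::real_normed_vector. norm x ^ 2)"
proof (rule convex_onI)
  fix x y :: 'a and t :: real
  assume t: "0 < t" "t < 1"
  have "norm ((1 - t) *\<^sub>R x + t *\<^sub>R y) \<le> (1 - t) * norm x + t * norm y"
    using norm_triangle_ineq[of "(1 - t) *\<^sub>R x" "t *\<^sub>R y"] t by simp
  then have "norm ((1 - t) *\<^sub>R x + t *\<^sub>R y) ^ 2 \<le> ((1 - t) * norm x + t * norm y) ^ 2"
    by (simp add: power_mono)
  also have "\<dots> \<le> (1 - t) * norm x ^ 2 + t * norm y ^ 2"
    using convex_onD[OF convex_power2, of t "norm x" "norm y"] t by simp
  finally show "norm ((1 - t) *\<^sub>R x + t *\<^sub>R y) ^ 2 \<le> (1 - t) * norm x ^ 2 + t * norm y ^ 2" .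
qed simp

lemma convex_comb_less:
  fixes f l :: "'b \<Rightarrow> real"
  assumes "finite A" "\<forall>a\<in>A. 0 \<le> l a" "sum l A = 1" "\<forall>a\<in>A. f a < b"
  shows "(\<Sum>a\<in>A. l a * f a) < b"
  using convex_sum[of A "{..<b}" l f] assms by simp

lemma convex_comb_greater:
  fixes f l :: "'b \<Rightarrow> real"
  assumes "finite A" "\<forall>a\<in>A. 0 \<le> l a" "sum l A = 1" "\<forall>a\<in>A. b < f a"
  shows "b < (\<Sum>a\<in>A. l a * f a)"
  using convex_sum[of A "{b<..}" l f] assms by simp

section \<open>Powers of points with respect to spheres\<close>

definition sphere_power :: "'a::metric_space \<Rightarrow> real \<Rightarrow> 'a \<Rightarrow> real" where
  "sphere_power c r x = dist x c ^ 2 - r ^ 2"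

lemma sphere_power_pos_iff: "0 \<le> r \<Longrightarrow> 0 < sphere_power c r x \<longleftrightarrow> x \<notin> cball c r"
  using power2_less_imp_less[of r "dist c x"] power_strict_mono[of r "dist c x" 2]
  by (auto simp: sphere_power_def dist_commute)

lemma sphere_power_neg_iff: "0 \<le> r \<Longrightarrow> sphere_power c r x < 0 \<longleftrightarrow> x \<in> ball c r"
  using power2_less_imp_less[of "dist c x" r] power_strict_mono[of "dist c x" r 2]
  by (auto simp: sphere_power_def dist_commute)

lemma tendsto_sphere_power [tendsto_intros]:
  "(f \<longlongrightarrow> l) F \<Longrightarrow> ((\<lambda>t. sphere_power c r (f t)) \<longlongrightarrow> sphere_power c r l) F"
  unfolding sphere_power_def by (intro tendsto_intros)

lemma sphere_power_add:
  fixes c x v :: "'a::real_inner"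
  shows "sphere_power c r (x + v) = sphere_power c r x + 2 * inner v (x - c) + norm v ^ 2"
  using dot_norm[of v "x - c"] unfolding sphere_power_def dist_norm by (simp add: algebra_simps)

lemma sphere_power_moving_away:
  fixes c x y :: "'a::real_inner"
  assumes "sphere_power c r x = 0" "sphere_power c r y < 0" "0 < t"
  shows "0 < sphere_power c r (x - t *\<^sub>R (y - x))"
proof -
  have "sphere_power c r y = 2 * inner (y - x) (x - c) + norm (y - x) ^ 2"
    using sphere_power_add[of c r x "y - x"] assms(1) by simp
  then have "inner (y - x) (x - c) < 0"
    using assms(2) zero_le_power2[of "norm (y - x)"] by linarith
  then have "0 < t * - inner (y - x) (x - c)"
    using assms(3) by (simp add: mult_pos_neg)
  moreover have "sphere_power c r (x - t *\<^sub>R (y - x))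
      = 2 * (t * - inner (y - x) (x - c)) + t ^ 2 * norm (y - x) ^ 2"
    using sphere_power_add[of c r x "- t *\<^sub>R (y - x)"] assms(1) by (simp add: power_mult_distrib)
  ultimately show ?thesis
    using mult_nonneg_nonneg[OF zero_le_power2 zero_le_power2, of t "norm (y - x)"] by linarith
qed

definition power_cell :: "('i \<Rightarrow> 'a::metric_space) \<Rightarrow> ('i \<Rightarrow> real) \<Rightarrow> 'i set \<Rightarrow> 'i set \<Rightarrow> 'a set" where
  "power_cell c r K \<gamma> = {x. \<forall>i\<in>K. (i \<in> \<gamma> \<longrightarrow> sphere_power (c i) (r i) x < 0) \<and>
                                  (i \<notin> \<gamma> \<longrightarrow> 0 < sphere_power (c i) (r i) x)}"

lemma power_cell_nonempty:
  fixes c :: "'i \<Rightarrow> 'a::real_inner"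
  assumes "finite K"
    and sign_patterns: "\<And>\<gamma>. \<gamma> \<subseteq> K \<Longrightarrow> \<exists>x. \<forall>i\<in>K. i \<in> \<gamma> \<longleftrightarrow> sphere_power (c i) (r i) x < 0"
    and "\<gamma> \<subseteq> K"
  shows "power_cell c r K \<gamma> \<noteq> {}"
proof -
  obtain x where x: "\<forall>i\<in>K. i \<in> \<gamma> \<longleftrightarrow> sphere_power (c i) (r i) x < 0"
    using sign_patterns assms(3) by blast
  define J where "J = {j\<in>K. sphere_power (c j) (r j) x = 0}"
  obtain y where y: "\<forall>j\<in>J. sphere_power (c j) (r j) y < 0"
    using sign_patterns[of J] unfolding J_def by auto
  \<comment> \<open>\<open>x\<close> lies on the spheres indexed by \<open>J\<close>; moving away from \<open>y\<close>, which is inside all of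
    them, leaves their closed balls, and small moves keep the strict signs.\<close>
  define q where "q t = x - t *\<^sub>R (y - x)" for t :: real
  have "\<forall>\<^sub>F t in at_right 0. (i \<in> \<gamma> \<longrightarrow> sphere_power (c i) (r i) (q t) < 0) \<and>
                            (i \<notin> \<gamma> \<longrightarrow> 0 < sphere_power (c i) (r i) (q t))" if "i \<in> K" for i
  proof -
    have "(q \<longlongrightarrow> x) (at_right 0)"
      unfolding q_def by (auto intro!: tendsto_eq_intros)
    then have lim: "((\<lambda>t. sphere_power (c i) (r i) (q t)) \<longlongrightarrow> sphere_power (c i) (r i) x) (at_right 0)"
      by (rule tendsto_sphere_power)
    consider "sphere_power (c i) (r i) x < 0" | "sphere_power (c i) (r i) x = 0"
      | "0 < sphere_power (c i) (r i) x" by linarith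
    then show ?thesis
    proof cases
      case 1
      then show ?thesis using order_tendstoD(2)[OF lim 1] x that by simp
    next
      case 2
      then have "i \<in> J" "i \<notin> \<gamma>" using x that unfolding J_def by auto
      have "0 < sphere_power (c i) (r i) (q t)" if "0 < t" for t
        unfolding q_def using sphere_power_moving_away[OF 2 _ that] y \<open>i \<in> J\<close> by blast
      then show ?thesis
        using eventually_at_right_less[of 0] \<open>i \<notin> \<gamma>\<close> by (auto elim: eventually_mono)
    next
      case 3
      then show ?thesis using order_tendstoD(1)[OF lim 3] x that by simp
    qed
  qed
  then have "\<forall>\<^sub>F t in at_right 0. q t \<in> power_cell c r K \<gamma>"
    unfolding power_cell_def mem_Collect_eq eventually_ball_finite_distrib[OF assms(1)] by blast
  then show ?thesis
    using eventually_happens'[OF trivial_limit_at_right_real] by blast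
qed

section \<open>A discrete Poincare-Miranda lemma\<close>

lemma sum_Pow_insert:
  assumes "finite M" "a \<notin> M"
  shows "sum F (Pow (insert a M)) = sum F (Pow M) + (\<Sum>S\<in>Pow M. F (insert a S))"
proof -
  have "inj_on (insert a) (Pow M)"
    using assms(2) by (meson PowD inj_onI insert_ident subsetD)
  moreover have "Pow M \<inter> insert a ` Pow M = {}"
    using assms(2) by blast
  ultimately show ?thesis
    unfolding Pow_insert using assms(1) by (simp add: sum.union_disjoint sum.reindex)
qed

lemma convex_comb_zero_Pow_insert:
  fixes y :: "'i set \<Rightarrow> 'i \<Rightarrow> real"
  assumes "finite M" "a \<notin> M"
    and l0: "\<forall>S\<in>Pow M. 0 \<le> l0 S" "sum l0 (Pow M) = 1" "\<forall>i\<in>M. (\<Sum>S\<in>Pow M. l0 S * y S i) = 0"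
    and l1: "\<forall>S\<in>Pow M. 0 \<le> l1 S" "sum l1 (Pow M) = 1"
      "\<forall>i\<in>M. (\<Sum>S\<in>Pow M. l1 S * y (insert a S) i) = 0"
    and signs: "0 < (\<Sum>S\<in>Pow M. l0 S * y S a)" "(\<Sum>S\<in>Pow M. l1 S * y (insert a S) a) < 0"
  shows "\<exists>l. (\<forall>T\<in>Pow (insert a M). 0 \<le> l T) \<and> sum l (Pow (insert a M)) = 1 \<and>
    (\<forall>i\<in>insert a M. (\<Sum>T\<in>Pow (insert a M). l T * y T i) = 0)"
proof -
  define A0 where "A0 = (\<Sum>S\<in>Pow M. l0 S * y S a)"
  define A1 where "A1 = (\<Sum>S\<in>Pow M. l1 S * y (insert a S) a)"
  define w0 where "w0 = - A1 / (A0 - A1)"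
  define w1 where "w1 = A0 / (A0 - A1)"
  have "A0 - A1 \<noteq> 0" "0 \<le> w0" "0 \<le> w1"
    using signs unfolding A0_def A1_def w0_def w1_def by (simp_all add: divide_nonpos_pos)
  define l where "l T = (if a \<in> T then w1 * l1 (T - {a}) else w0 * l0 T)" for T
  have weighted: "(\<Sum>T\<in>Pow (insert a M). l T * f T)
      = w0 * (\<Sum>S\<in>Pow M. l0 S * f S) + w1 * (\<Sum>S\<in>Pow M. l1 S * f (insert a S))" for f
  proof -
    have "l S = w0 * l0 S" "l (insert a S) = w1 * l1 S" if "S \<in> Pow M" for S
    proof -
      have "a \<notin> S" using that assms(2) by blast
      then show "l S = w0 * l0 S" "l (insert a S) = w1 * l1 S"
        unfolding l_def by (simp_all add: Diff_insert_absorb)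
    qed
    then have "(\<Sum>S\<in>Pow M. l S * f S) = (\<Sum>S\<in>Pow M. w0 * (l0 S * f S))"
      "(\<Sum>S\<in>Pow M. l (insert a S) * f (insert a S)) = (\<Sum>S\<in>Pow M. w1 * (l1 S * f (insert a S)))"
      by (auto intro: sum.cong)
    then show ?thesis
      unfolding sum_Pow_insert[OF assms(1,2)] sum_distrib_left by simp
  qed
  show ?thesis
  proof (intro exI[of _ l] conjI ballI)
    fix T assume "T \<in> Pow (insert a M)"
    then have "T - {a} \<in> Pow M" "a \<notin> T \<Longrightarrow> T \<in> Pow M" by auto
    then show "0 \<le> l T"
      using l0(1) l1(1) \<open>0 \<le> w0\<close> \<open>0 \<le> w1\<close> unfolding l_def by simp
  next
    show "sum l (Pow (insert a M)) = 1"
      using weighted[of "\<lambda>_. 1"] l0(2) l1(2) \<open>A0 - A1 \<noteq> 0\<close>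
      by (simp add: w0_def w1_def divide_simps)
  next
    fix i assume "i \<in> insert a M"
    then show "(\<Sum>T\<in>Pow (insert a M). l T * y T i) = 0"
      using weighted[of "\<lambda>T. y T i"] l0(3) l1(3) \<open>A0 - A1 \<noteq> 0\<close>
      by (auto simp: w0_def w1_def A0_def A1_def divide_simps)
  qed
qed

lemma orthant_points_convex_comb_zero:
  fixes y :: "'i set \<Rightarrow> 'i \<Rightarrow> real"
  assumes "finite M"
    and "\<And>S i. S \<subseteq> M \<Longrightarrow> i \<in> S \<Longrightarrow> y S i < 0"
    and "\<And>S i. S \<subseteq> M \<Longrightarrow> i \<in> M - S \<Longrightarrow> 0 < y S i"
  shows "\<exists>l. (\<forall>S\<in>Pow M. 0 \<le> l S) \<and> sum l (Pow M) = 1 \<and> (\<forall>i\<in>M. (\<Sum>S\<in>Pow M. l S * y S i) = 0)"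
  using assms
proof (induction M arbitrary: y rule: finite_induct)
  case empty
  show ?case by (intro exI[of _ "\<lambda>_. 1"]) simp
next
  case (insert a M)
  have "\<exists>l. (\<forall>S\<in>Pow M. 0 \<le> l S) \<and> sum l (Pow M) = 1 \<and> (\<forall>i\<in>M. (\<Sum>S\<in>Pow M. l S * y S i) = 0)"
  proof (rule insert.IH)
    show "y S i < 0" if "S \<subseteq> M" "i \<in> S" for S i
      using that insert.prems(1)[of S i] by blast
    show "0 < y S i" if "S \<subseteq> M" "i \<in> M - S" for S i
      using that insert.prems(2)[of S i] by blast
  qed
  then obtain l0 where l0: "\<forall>S\<in>Pow M. 0 \<le> l0 S" "sum l0 (Pow M) = 1"
      "\<forall>i\<in>M. (\<Sum>S\<in>Pow M. l0 S * y S i) = 0"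
    by blast
  have "\<exists>l. (\<forall>S\<in>Pow M. 0 \<le> l S) \<and> sum l (Pow M) = 1 \<and>
      (\<forall>i\<in>M. (\<Sum>S\<in>Pow M. l S * y (insert a S) i) = 0)"
  proof (rule insert.IH)
    show "y (insert a S) i < 0" if "S \<subseteq> M" "i \<in> S" for S i
      using that insert.prems(1)[of "insert a S" i] by blast
    show "0 < y (insert a S) i" if "S \<subseteq> M" "i \<in> M - S" for S i
      using that insert.prems(2)[of "insert a S" i] insert.hyps(2) by blast
  qed
  then obtain l1 where l1: "\<forall>S\<in>Pow M. 0 \<le> l1 S" "sum l1 (Pow M) = 1"
      "\<forall>i\<in>M. (\<Sum>S\<in>Pow M. l1 S * y (insert a S) i) = 0"
    by blast
  have "0 < y S a" "y (insert a S) a < 0" if "S \<subseteq> M" for S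
    using that insert.prems(2)[of S a] insert.prems(1)[of "insert a S" a] insert.hyps(2) by auto
  then have "0 < (\<Sum>S\<in>Pow M. l0 S * y S a)" "(\<Sum>S\<in>Pow M. l1 S * y (insert a S) a) < 0"
    using insert.hyps(1) l0(1,2) l1(1,2) by (auto intro: convex_comb_greater convex_comb_less)
  then show ?case
    by (rule convex_comb_zero_Pow_insert[OF insert.hyps l0 l1])
qed

section \<open>Lifting to the paraboloid\<close>

text \<open>The shift in \<open>normal_lift\<close>, along the unit normal \<open>u\<close> of a hyperplane \<open>u \<bullet> z = b\<close>
  through all centres, is chosen so that the shifted point \<open>q\<close> satisfies
  \<open>|q - c|\<^sup>2 - |x - c|\<^sup>2 = T - |x|\<^sup>2\<close> for every \<open>c\<close> on that hyperplane.\<close>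

definition lifted_power :: "'a::real_inner \<Rightarrow> real \<Rightarrow> 'a \<Rightarrow> real \<Rightarrow> real" where
  "lifted_power c r x T = T - 2 * inner c x + norm c ^ 2 - r ^ 2"

definition normal_lift :: "'a::real_inner \<Rightarrow> real \<Rightarrow> 'a \<Rightarrow> real \<Rightarrow> 'a" where
  "normal_lift u b x T = x + (sqrt ((inner u x - b) ^ 2 + T - norm x ^ 2) - (inner u x - b)) *\<^sub>R u"

lemma lifted_power_norm_power2: "lifted_power c r x (norm x ^ 2) = sphere_power c r x"
  using dot_norm[of c "x - c"] unfolding lifted_power_def sphere_power_def dist_norm
  by (simp add: inner_diff_right dot_square_norm algebra_simps)

lemma lifted_power_segment:
  "lifted_power c r ((1 - s) *\<^sub>R x + s *\<^sub>R y) ((1 - s) * T + s * T')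
     = (1 - s) * lifted_power c r x T + s * lifted_power c r y T'"
  unfolding lifted_power_def by (simp add: inner_simps algebra_simps)

lemma lifted_power_convex_sum:
  assumes "sum l A = 1"
  shows "lifted_power c r (\<Sum>a\<in>A. l a *\<^sub>R x a) (\<Sum>a\<in>A. l a * T a)
           = (\<Sum>a\<in>A. l a * lifted_power c r (x a) (T a))"
proof -
  have "(\<Sum>a\<in>A. l a * lifted_power c r (x a) (T a))
      = (\<Sum>a\<in>A. l a * T a) - 2 * (\<Sum>a\<in>A. l a * inner c (x a)) + (norm c ^ 2 - r ^ 2) * sum l A"
    unfolding lifted_power_def
    by (simp add: algebra_simps sum.distrib sum_subtractf sum_distrib_left sum_distrib_right)
  then show ?thesis
    using assms unfolding lifted_power_def by (simp add: inner_sum_right)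
qed

lemma sphere_power_normal_lift:
  assumes "norm u = 1" "inner u c = b" "norm x ^ 2 \<le> T"
  shows "sphere_power c r (normal_lift u b x T) = lifted_power c r x T"
proof -
  define a where "a = inner u x - b"
  define s where "s = sqrt (a ^ 2 + T - norm x ^ 2)"
  have s2: "s ^ 2 = a ^ 2 + T - norm x ^ 2"
    unfolding s_def using assms(3) by (simp add: add_increasing)
  have "inner u (x - c) = a"
    using assms(2) by (simp add: a_def inner_diff_right)
  moreover have "normal_lift u b x T = x + (s - a) *\<^sub>R u"
    by (simp add: normal_lift_def a_def s_def)
  ultimately have "sphere_power c r (normal_lift u b x T) = sphere_power c r x + 2 * (s - a) * a + (s - a) ^ 2"
    using sphere_power_add[of c r x "(s - a) *\<^sub>R u"] assms(1) by (simp add: power_mult_distrib)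
  also have "\<dots> = sphere_power c r x + T - norm x ^ 2"
    using s2 by (simp add: power2_eq_square algebra_simps)
  also have "\<dots> = lifted_power c r x T"
    using lifted_power_norm_power2[of c r x] by (simp add: lifted_power_def)
  finally show ?thesis .
qed

lemma normal_lift_in_closure_power_cell:
  fixes c :: "'i \<Rightarrow> 'a::real_inner"
  assumes u: "norm u = 1" "\<forall>i\<in>K. inner u (c i) = b"
    and "norm x ^ 2 \<le> T" and y: "y \<in> power_cell c r K \<gamma>"
    and weak_signs: "\<forall>i\<in>K \<inter> \<gamma>. lifted_power (c i) (r i) x T \<le> 0"
      "\<forall>i\<in>K - \<gamma>. 0 \<le> lifted_power (c i) (r i) x T"
  shows "normal_lift u b x T \<in> closure (power_cell c r K \<gamma>)"
proof -
  define q where "q s = normal_lift u b ((1 - s) *\<^sub>R x + s *\<^sub>R y) ((1 - s) * T + s * norm y ^ 2)" for s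
  have power_q: "sphere_power (c i) (r i) (q s)
      = (1 - s) * lifted_power (c i) (r i) x T + s * sphere_power (c i) (r i) y"
    if "i \<in> K" "0 \<le> s" "s \<le> 1" for i s
  proof -
    have "norm ((1 - s) *\<^sub>R x + s *\<^sub>R y) ^ 2 \<le> (1 - s) * norm x ^ 2 + s * norm y ^ 2"
      using convex_onD[OF convex_on_norm_power2, of s x y] that by simp
    also have "\<dots> \<le> (1 - s) * T + s * norm y ^ 2"
      using assms(3) that by (simp add: mult_left_mono)
    finally show ?thesis
      unfolding q_def using that u
      by (simp add: sphere_power_normal_lift lifted_power_segment lifted_power_norm_power2)
  qed
  have "q s \<in> power_cell c r K \<gamma>" if "0 < s" "s \<le> 1" for s
    unfolding power_cell_def
  proof (intro CollectI ballI conjI impI)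
    fix i assume "i \<in> K"
    show "sphere_power (c i) (r i) (q s) < 0" if "i \<in> \<gamma>"
      using power_q[of i s] \<open>i \<in> K\<close> that weak_signs(1) y \<open>0 < s\<close> \<open>s \<le> 1\<close>
      by (auto simp: power_cell_def intro!: add_nonpos_neg mult_nonneg_nonpos mult_pos_neg)
    show "0 < sphere_power (c i) (r i) (q s)" if "i \<notin> \<gamma>"
      using power_q[of i s] \<open>i \<in> K\<close> that weak_signs(2) y \<open>0 < s\<close> \<open>s \<le> 1\<close>
      by (auto simp: power_cell_def intro!: add_nonneg_pos)
  qed
  moreover have "\<forall>\<^sub>F s in at_right 0. 0 < s \<and> s \<le> (1::real)"
    unfolding eventually_at_right[OF zero_less_one] by (auto intro!: exI[of _ 1])
  ultimately have "\<forall>\<^sub>F s in at_right 0. q s \<in> power_cell c r K \<gamma>"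
    by (simp add: eventually_mono)
  then have "\<forall>\<^sub>F s in at_right 0. q s \<in> closure (power_cell c r K \<gamma>)"
    by (rule eventually_mono) (use closure_subset in blast)
  moreover have "(q \<longlongrightarrow> normal_lift u b x T) (at_right 0)"
    unfolding q_def normal_lift_def by (auto intro!: tendsto_eq_intros)
  ultimately show ?thesis
    by (intro Lim_in_closed_set[OF closed_closure]) auto
qed

lemma exists_lifted_point_with_power_signs:
  fixes c :: "'i \<Rightarrow> 'a::real_inner"
  assumes "finite K" and cells: "\<And>\<gamma>. \<gamma> \<subseteq> K \<Longrightarrow> power_cell c r K \<gamma> \<noteq> {}"
    and "\<sigma> \<subseteq> \<tau>" "\<tau> \<subseteq> K"
  shows "\<exists>x T. norm x ^ 2 \<le> T \<and> (\<forall>i\<in>\<sigma>. lifted_power (c i) (r i) x T < 0) \<and>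
    (\<forall>i\<in>\<tau> - \<sigma>. lifted_power (c i) (r i) x T = 0) \<and> (\<forall>i\<in>K - \<tau>. 0 < lifted_power (c i) (r i) x T)"
proof -
  define M where "M = \<tau> - \<sigma>"
  have "finite M"
    using assms(1,4) finite_subset unfolding M_def by blast
  define X where "X S = (SOME x. x \<in> power_cell c r K (\<sigma> \<union> S))" for S
  have X: "X S \<in> power_cell c r K (\<sigma> \<union> S)" if "S \<subseteq> M" for S
    unfolding X_def some_in_eq by (rule cells) (use that assms(3,4) in \<open>auto simp: M_def\<close>)
  define y where "y S i = sphere_power (c i) (r i) (X S)" for S i
  have y_neg: "y S i < 0" if "S \<subseteq> M" "i \<in> \<sigma> \<union> S" for S i
    using X[OF that(1)] that assms(3,4) unfolding y_def power_cell_def M_def by blast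
  have y_pos: "0 < y S i" if "S \<subseteq> M" "i \<in> K - (\<sigma> \<union> S)" for S i
    using X[OF that(1)] that unfolding y_def power_cell_def by blast
  obtain l where l: "\<forall>S\<in>Pow M. 0 \<le> l S" "sum l (Pow M) = 1"
      "\<forall>i\<in>M. (\<Sum>S\<in>Pow M. l S * y S i) = 0"
  proof -
    have "0 < y S i" if "S \<subseteq> M" "i \<in> M - S" for S i
      using y_pos[OF that(1)] that assms(4) unfolding M_def by blast
    then show thesis
      using orthant_points_convex_comb_zero[OF \<open>finite M\<close>, of y] y_neg that by blast
  qed
  define x where "x = (\<Sum>S\<in>Pow M. l S *\<^sub>R X S)"
  define T where "T = (\<Sum>S\<in>Pow M. l S * norm (X S) ^ 2)"
  have epi: "norm x ^ 2 \<le> T"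
    unfolding x_def T_def using \<open>finite M\<close> l(1,2)
    by (intro convex_on_sum[OF _ _ convex_on_norm_power2]) auto
  have lp: "lifted_power (c i) (r i) x T = (\<Sum>S\<in>Pow M. l S * y S i)" for i
    unfolding x_def T_def y_def lifted_power_convex_sum[OF l(2)] lifted_power_norm_power2 ..
  have neg: "lifted_power (c i) (r i) x T < 0" if "i \<in> \<sigma>" for i
  proof -
    have "\<forall>S\<in>Pow M. y S i < 0" using y_neg that by blast
    then show ?thesis
      unfolding lp using \<open>finite M\<close> l(1,2) convex_comb_less[of "Pow M" l "\<lambda>S. y S i" 0] by simp
  qed
  have zero: "lifted_power (c i) (r i) x T = 0" if "i \<in> \<tau> - \<sigma>" for i
    unfolding lp using l(3) that M_def by simp
  have pos: "0 < lifted_power (c i) (r i) x T" if "i \<in> K - \<tau>" for i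
  proof -
    have "\<forall>S\<in>Pow M. 0 < y S i" using y_pos that assms(3) unfolding M_def by blast
    then show ?thesis
      unfolding lp using \<open>finite M\<close> l(1,2) convex_comb_greater[of "Pow M" l 0 "\<lambda>S. y S i"] by simp
  qed
  show ?thesis
    using epi neg zero pos by blast
qed

lemma exists_unit_normal_of_card_le_DIM:
  fixes S :: "'a::euclidean_space set"
  assumes "finite S" "card S \<le> DIM('a)"
  obtains u b where "norm u = 1" "\<forall>x\<in>S. inner u x = b"
proof -
  have "aff_dim S < DIM('a)"
    using aff_dim_le_card[OF assms(1)] assms(2) by linarith
  then obtain a b where "a \<noteq> 0" "S \<subseteq> {x. inner a x = b}"
    by (rule aff_lowdim_subset_hyperplane)
  show thesis
  proof (rule that[of "a /\<^sub>R norm a" "b / norm a"])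
    show "norm (a /\<^sub>R norm a) = 1"
      using \<open>a \<noteq> 0\<close> by simp
    show "\<forall>x\<in>S. inner (a /\<^sub>R norm a) x = b / norm a"
      using \<open>S \<subseteq> {x. inner a x = b}\<close> by (auto simp: divide_inverse_commute)
  qed
qed

lemma exists_point_in_closures_of_power_cells:
  fixes c :: "'i \<Rightarrow> 'a::euclidean_space"
  assumes "finite K" "card K \<le> DIM('a)"
    and cells: "\<And>\<gamma>. \<gamma> \<subseteq> K \<Longrightarrow> power_cell c r K \<gamma> \<noteq> {}"
    and "\<sigma> \<subseteq> \<tau>" "\<tau> \<subseteq> K"
  shows "\<exists>p. (\<forall>i\<in>\<sigma>. sphere_power (c i) (r i) p < 0) \<and> (\<forall>i\<in>K - \<tau>. 0 < sphere_power (c i) (r i) p) \<and>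
    (\<forall>\<gamma>. \<sigma> \<subseteq> \<gamma> \<and> \<gamma> \<subseteq> \<tau> \<longrightarrow> p \<in> closure (power_cell c r K \<gamma>))"
proof -
  have "finite (c ` K)" "card (c ` K) \<le> DIM('a)"
    using assms(1,2) card_image_le[OF assms(1), of c] by auto
  then obtain u b where "norm u = 1" "\<forall>z\<in>c ` K. inner u z = b"
    by (rule exists_unit_normal_of_card_le_DIM)
  then have u: "norm u = 1" "\<forall>i\<in>K. inner u (c i) = b"
    by simp_all
  obtain x T where xT: "norm x ^ 2 \<le> T" "\<forall>i\<in>\<sigma>. lifted_power (c i) (r i) x T < 0"
      "\<forall>i\<in>\<tau> - \<sigma>. lifted_power (c i) (r i) x T = 0" "\<forall>i\<in>K - \<tau>. 0 < lifted_power (c i) (r i) x T"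
    using exists_lifted_point_with_power_signs[OF assms(1) cells assms(4,5)] by blast
  define p where "p = normal_lift u b x T"
  have power_p: "sphere_power (c i) (r i) p = lifted_power (c i) (r i) x T" if "i \<in> K" for i
    unfolding p_def by (rule sphere_power_normal_lift[OF u(1) _ xT(1)]) (use u(2) that in blast)
  have "p \<in> closure (power_cell c r K \<gamma>)" if \<gamma>: "\<sigma> \<subseteq> \<gamma>" "\<gamma> \<subseteq> \<tau>" for \<gamma>
  proof -
    obtain y where "y \<in> power_cell c r K \<gamma>"
      using cells[of \<gamma>] \<gamma> assms(5) by blast
    moreover have "\<forall>i\<in>K \<inter> \<gamma>. lifted_power (c i) (r i) x T \<le> 0"
    proof
      fix i assume "i \<in> K \<inter> \<gamma>"
      then show "lifted_power (c i) (r i) x T \<le> 0"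
        using xT(2,3) \<gamma> by (cases "i \<in> \<sigma>") (auto simp: less_imp_le)
    qed
    moreover have "\<forall>i\<in>K - \<gamma>. 0 \<le> lifted_power (c i) (r i) x T"
    proof
      fix i assume i: "i \<in> K - \<gamma>"
      then have "i \<notin> \<sigma>" using \<gamma>(1) by blast
      then show "0 \<le> lifted_power (c i) (r i) x T"
        using xT(3,4) i by (cases "i \<in> \<tau>") (auto simp: less_imp_le)
    qed
    ultimately show ?thesis
      unfolding p_def by (rule normal_lift_in_closure_power_cell[OF u xT(1)])
  qed
  moreover have "\<forall>i\<in>\<sigma>. sphere_power (c i) (r i) p < 0"
    using power_p xT(2) assms(4,5) by (simp add: subset_iff)
  moreover have "\<forall>i\<in>K - \<tau>. 0 < sphere_power (c i) (r i) p"
    using power_p xT(4) by simp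
  ultimately show ?thesis by blast
qed

section \<open>Atoms of balls\<close>

lemma atom_balls:
  fixes c :: "nat \<Rightarrow> 'a::metric_space"
  assumes "\<And>i. i \<in> {1..n} \<Longrightarrow> 0 \<le> r i \<and> U i = ball (c i) (r i)" and "\<gamma> \<subseteq> {1..n}"
  shows "atom U n \<gamma> = {x. \<forall>i\<in>{1..n}. i \<in> \<gamma> \<longleftrightarrow> sphere_power (c i) (r i) x < 0}"
proof (intro set_eqI)
  fix x
  have mem: "x \<in> U i \<longleftrightarrow> sphere_power (c i) (r i) x < 0" if "i \<in> {1..n}" for i
    using assms(1)[OF that] by (simp add: sphere_power_neg_iff)
  have "x \<in> atom U n \<gamma> \<longleftrightarrow> (\<forall>i\<in>{1..n}. i \<in> \<gamma> \<longleftrightarrow> x \<in> U i)"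
    using assms(2) unfolding atom_def by auto
  also have "\<dots> \<longleftrightarrow> (\<forall>i\<in>{1..n}. i \<in> \<gamma> \<longleftrightarrow> sphere_power (c i) (r i) x < 0)"
    using mem by auto
  finally show "x \<in> atom U n \<gamma> \<longleftrightarrow> x \<in> {x. \<forall>i\<in>{1..n}. i \<in> \<gamma> \<longleftrightarrow> sphere_power (c i) (r i) x < 0}"
    by simp
qed

lemma atom_meeting_nhds_in_interval:
  fixes U :: "nat \<Rightarrow> 'a::topological_space set"
  assumes "\<sigma> \<subseteq> {1..n}"
    and inner: "\<And>i. i \<in> \<sigma> \<Longrightarrow> open (U i) \<and> p \<in> U i"
    and outer: "\<And>j. j \<in> {1..n} - \<tau> \<Longrightarrow> p \<notin> closure (U j)"
    and "\<gamma> \<subseteq> {1..n}" and meets: "\<And>N. open N \<Longrightarrow> p \<in> N \<Longrightarrow> atom U n \<gamma> \<inter> N \<noteq> {}"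
  shows "\<gamma> \<in> interval \<sigma> \<tau>"
proof -
  define N where "N = (\<Inter>i\<in>\<sigma>. U i) \<inter> (\<Inter>j\<in>{1..n} - \<tau>. - closure (U j))"
  have "finite \<sigma>"
    using assms(1) finite_subset by blast
  then have "open N"
    unfolding N_def using inner by (intro open_Int open_INT) auto
  moreover have "p \<in> N"
    unfolding N_def using inner outer by blast
  ultimately obtain z where z: "z \<in> atom U n \<gamma>" "z \<in> N"
    using meets by blast
  have "\<sigma> \<subseteq> \<gamma>"
  proof
    fix i assume "i \<in> \<sigma>"
    then have "z \<in> U i" "i \<in> {1..n}"
      using z(2) assms(1) unfolding N_def by blast+
    then show "i \<in> \<gamma>"
      using z(1) unfolding atom_def by blast
  qed
  moreover have "\<gamma> \<subseteq> \<tau>"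
  proof
    fix j assume "j \<in> \<gamma>"
    then have "z \<in> closure (U j)"
      using z(1) closure_subset unfolding atom_def by blast
    then show "j \<in> \<tau>"
      using z(2) \<open>j \<in> \<gamma>\<close> \<open>\<gamma> \<subseteq> {1..n}\<close> unfolding N_def by blast
  qed
  ultimately show ?thesis
    unfolding interval_def by blast
qed

lemma pierceable_atI:
  fixes U :: "nat \<Rightarrow> 'a::topological_space set"
  assumes "interval \<sigma> \<tau> \<subseteq> code U n" "\<sigma> \<subseteq> {1..n}"
    and inner: "\<And>i. i \<in> \<sigma> \<Longrightarrow> open (U i) \<and> p \<in> U i"
    and outer: "\<And>j. j \<in> {1..n} - \<tau> \<Longrightarrow> p \<notin> closure (U j)"
    and limit: "\<And>\<gamma>. \<gamma> \<in> interval \<sigma> \<tau> \<Longrightarrow> p \<in> closure (atom U n \<gamma>)"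
  shows "pierceable_at U n \<sigma> \<tau> p"
  unfolding pierceable_at_def
proof (intro conjI equalityI subsetI)
  fix \<gamma> assume "\<gamma> \<in> interval \<sigma> \<tau>"
  then show "\<gamma> \<in> code U n" using assms(1) by blast
next
  fix \<gamma> assume "\<gamma> \<in> {\<gamma> \<in> code U n. \<forall>N. open N \<and> p \<in> N \<longrightarrow> atom U n \<gamma> \<inter> N \<noteq> {}}"
  then have \<gamma>: "\<gamma> \<subseteq> {1..n}" and meets: "\<And>N. open N \<Longrightarrow> p \<in> N \<Longrightarrow> atom U n \<gamma> \<inter> N \<noteq> {}"
    unfolding code_def by auto
  show "\<gamma> \<in> interval \<sigma> \<tau>"
    by (rule atom_meeting_nhds_in_interval[OF assms(2) inner outer \<gamma> meets])
next
  fix \<gamma> assume \<gamma>: "\<gamma> \<in> interval \<sigma> \<tau>"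
  have "atom U n \<gamma> \<inter> N \<noteq> {}" if "open N" "p \<in> N" for N
    using open_Int_closure_eq_empty[OF that(1), of "atom U n \<gamma>"] limit[OF \<gamma>] that(2) by blast
  moreover have "\<gamma> \<in> code U n"
    using assms(1) \<gamma> by blast
  ultimately show "\<gamma> \<in> {\<gamma> \<in> code U n. \<forall>N. open N \<and> p \<in> N \<longrightarrow> atom U n \<gamma> \<inter> N \<noteq> {}}"
    by blast
qed

lemma power_cell_subset_atom:
  fixes c :: "nat \<Rightarrow> 'a::metric_space"
  assumes "\<And>i. i \<in> {1..n} \<Longrightarrow> 0 \<le> r i \<and> U i = ball (c i) (r i)" and "\<gamma> \<subseteq> {1..n}"
  shows "power_cell c r {1..n} \<gamma> \<subseteq> atom U n \<gamma>"
proof -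
  have "atom U n \<gamma> = {x. \<forall>i\<in>{1..n}. i \<in> \<gamma> \<longleftrightarrow> sphere_power (c i) (r i) x < 0}"
    by (rule atom_balls[OF assms])
  then show ?thesis
    unfolding power_cell_def by auto
qed

lemma power_cell_nonempty_of_code:
  fixes c :: "nat \<Rightarrow> 'a::real_inner"
  assumes balls: "\<And>i. i \<in> {1..n} \<Longrightarrow> 0 \<le> r i \<and> U i = ball (c i) (r i)"
    and "code U n = Pow {1..n}" and "\<gamma> \<subseteq> {1..n}"
  shows "power_cell c r {1..n} \<gamma> \<noteq> {}"
proof (rule power_cell_nonempty[OF _ _ assms(3)])
  fix \<gamma>' assume \<gamma>': "\<gamma>' \<subseteq> {1..n}"
  then have "atom U n \<gamma>' \<noteq> {}"
    using assms(2) unfolding code_def by blast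
  moreover have "atom U n \<gamma>' = {x. \<forall>i\<in>{1..n}. i \<in> \<gamma>' \<longleftrightarrow> sphere_power (c i) (r i) x < 0}"
    by (rule atom_balls[OF balls \<gamma>'])
  ultimately show "\<exists>x. \<forall>i\<in>{1..n}. i \<in> \<gamma>' \<longleftrightarrow> sphere_power (c i) (r i) x < 0"
    by blast
qed simp

lemma pierceable_at_balls:
  fixes c :: "nat \<Rightarrow> 'a::real_normed_vector"
  assumes balls: "\<And>i. i \<in> {1..n} \<Longrightarrow> 0 < r i \<and> U i = ball (c i) (r i)"
    and "code U n = Pow {1..n}" and "\<sigma> \<subseteq> \<tau>" "\<tau> \<subseteq> {1..n}"
    and p_in: "\<forall>i\<in>\<sigma>. sphere_power (c i) (r i) p < 0"
    and p_out: "\<forall>i\<in>{1..n} - \<tau>. 0 < sphere_power (c i) (r i) p"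
    and p_limit: "\<forall>\<gamma>. \<sigma> \<subseteq> \<gamma> \<and> \<gamma> \<subseteq> \<tau> \<longrightarrow> p \<in> closure (power_cell c r {1..n} \<gamma>)"
  shows "pierceable_at U n \<sigma> \<tau> p"
proof (rule pierceable_atI)
  show "interval \<sigma> \<tau> \<subseteq> code U n" "\<sigma> \<subseteq> {1..n}"
    unfolding assms(2) interval_def using assms(3,4) by auto
  show "open (U i) \<and> p \<in> U i" if "i \<in> \<sigma>" for i
  proof -
    have "i \<in> {1..n}" using that assms(3,4) by blast
    then show ?thesis
      using balls[of i] p_in that sphere_power_neg_iff[of "r i" "c i" p] by auto
  qed
  show "p \<notin> closure (U j)" if "j \<in> {1..n} - \<tau>" for j
    using balls[of j] p_out that sphere_power_pos_iff[of "r j" "c j" p] by auto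
  show "p \<in> closure (atom U n \<gamma>)" if "\<gamma> \<in> interval \<sigma> \<tau>" for \<gamma>
  proof -
    have \<gamma>: "\<sigma> \<subseteq> \<gamma>" "\<gamma> \<subseteq> {1..n}"
      using that assms(4) unfolding interval_def by auto
    have "power_cell c r {1..n} \<gamma> \<subseteq> atom U n \<gamma>"
      by (rule power_cell_subset_atom[OF _ \<gamma>(2)]) (simp add: balls less_imp_le)
    then show ?thesis
      using p_limit that closure_mono unfolding interval_def by blast
  qed
qed

theorem lemma3p2:
  fixes U :: "nat \<Rightarrow> 'a::euclidean_space set" and k :: nat
  assumes "1 \<le> k" and "k \<le> DIM('a)"
    and "independent_balls U k"
    and "\<sigma> \<subseteq> \<tau>" and "\<tau> \<subseteq> {1..k}"
  shows "\<exists>p. pierceable_at U k \<sigma> \<tau> p"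
proof -
  have "\<forall>i\<in>{1..k}. \<exists>c r. 0 < r \<and> U i = ball c r" and code: "code U k = Pow {1..k}"
    using assms(3) unfolding independent_balls_def by blast+
  then obtain c r where balls: "\<And>i. i \<in> {1..k} \<Longrightarrow> 0 < r i \<and> U i = ball (c i) (r i)"
    by metis
  have cells: "power_cell c r {1..k} \<gamma> \<noteq> {}" if "\<gamma> \<subseteq> {1..k}" for \<gamma>
    by (rule power_cell_nonempty_of_code[OF _ code that]) (simp add: balls less_imp_le)
  have "\<exists>p. (\<forall>i\<in>\<sigma>. sphere_power (c i) (r i) p < 0) \<and> (\<forall>i\<in>{1..k} - \<tau>. 0 < sphere_power (c i) (r i) p) \<and>
      (\<forall>\<gamma>. \<sigma> \<subseteq> \<gamma> \<and> \<gamma> \<subseteq> \<tau> \<longrightarrow> p \<in> closure (power_cell c r {1..k} \<gamma>))"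
    by (rule exists_point_in_closures_of_power_cells[OF _ _ cells assms(4,5)]) (use assms(2) in simp_all)
  then show ?thesis
    using pierceable_at_balls[OF balls code assms(4,5)] by blast
qed

end
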